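(* Consider the ring network, traffic model and shortest-path routing described in the context, and fix a wavelength $\lambda\in\{1,\ldots,\Lambda\}$. For every node $n\in\{0,\ldots,N-1\}$, \[ \mathbb{P}\big(\overset{\curvearrowright}{(n+1)}_{\lambda}\big)=\mathbb{P}\big(\overset{\curvearrowright}{n}_{\lambda}\big)+\mathbb{P}(S=n)-\mathbb{P}(\mathcal{G}_{\lambda}=n), \] where indices of segments are taken modulo $N$ (so $\overset{\curvearrowright}{0}_\lambda=\overset{\curvearrowright}{N}_\lambda$).
   Context: Network: a bidirectional ring with $N$ nodes labeled $1,\ldots,N$ in clockwise order; node labels are taken modulo $N$, so node $N$ is also called node $0$. There are $\Lambda$ wavelength channels $1,\ldots,\Lambda$ in each ring direction, and $\eta:=N/\Lambda$ is a positive integer. Node $n$ receives (is homed) on wavelength $\lambda$ iff $n\in\mathcal{M}_\lambda:=\{\lambda+k\Lambda: k=0,\ldots,\eta-1\}$. For $1\le n\le N$, $u_n$ denotes the clockwise ring segment from node $n-1$ to node $n$. Node $N$ is the hotspot. Traffic: each packet has a sender $S$ and a destination (fanout) set $\mathcal{F}\subset\{1,\ldots,N\}\setminus\{S\}$, generated as follows, with $\alpha,\beta,\gamma\ge 0$, $\alpha+\beta+\gamma=1$. With probability $\alpha$ (uniform traffic): $S$ is uniform on $\{1,\ldots,N\}$, a fanout $l\in\{1,\ldots,N-1\}$ is drawn from a distribution $(\mu_l)$, and $\mathcal{F}$ is uniform among $l$-subsets of $\{1,\ldots,N\}\setminus\{S\}$. With probability $\beta$ (hotspot destination traffic): $S$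 is uniform on $\{1,\ldots,N-1\}$, $l$ is drawn from $(\nu_l)$, and $\mathcal{F}=\mathcal{F}'\cup\{N\}$ with $\mathcal{F}'$ uniform among $(l-1)$-subsets of $\{1,\ldots,N-1\}\setminus\{S\}$. With probability $\gamma$ (hotspot source traffic): $S=N$, $l$ is drawn from $(\kappa_l)$, and $\mathcal{F}$ is uniform among $l$-subsets of $\{1,\ldots,N-1\}$. $\mathbb{P}$ denotes the probability measure of this model. Shortest-path routing on wavelength $\lambda$: let $\mathcal{F}_\lambda:=\mathcal{F}\cap\mathcal{M}_\lambda$ and $\mathcal{A}_\lambda:=\mathcal{F}_\lambda\cup\{S\}$, with $|\mathcal{F}_\lambda|=\ell$. The "gaps" are the $\ell+1$ clockwise arcs between cyclically consecutive nodes of $\mathcal{A}_\lambda$ (if $\mathcal{A}_\lambda=\{X_1<\dots<X_{\ell+1}\}$, their lengths are $X_1+N-X_{\ell+1}$ and $X_{i}-X_{i-1}$, $i=2,\ldots,\ell+1$). A largest gap is chosen, uniformly at random among ties; it is called the chosen largest gap $CLG_\lambda$, and $\mathcal{G}_\lambda\in\{0,\ldots,N-1\}$ denotes the node at which $CLG_\lambda$ starts (in the clockwise sense). The packet is sent on wavelength $\lambda$ from $S$ clockwise up to node $\mathcal{G}_\lambda$ and from $S$ counterclockwise up to the node ending $CLG_\lambda$, so that exactly the segments outside $CLG_\lambda$ are traversed (if $\mathcal{F}_\lambda=\emptyset$ nothing is sent on $\lambda$). The event $\overset{\curvearrowright}{n}_{\lambda}$ means that segment $u_n$ is traversed in the clockwise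 direction on wavelength $\lambda$, i.e., $u_n$ lies on the clockwise arc from $S$ to $\mathcal{G}_\lambda$. *)

theory Defs
  imports "HOL-Probability.Probability"
begin

text \<open>Nodes are labelled 1..N; node N is also node 0. Internally we reduce labels mod N
  to residues in {0..<N}.\<close>

definition homed :: "nat \<Rightarrow> nat \<Rightarrow> nat \<Rightarrow> nat set" where
  "homed N \<Lambda> w = {w + k * \<Lambda> | k. k < N div \<Lambda>}"

definition active :: "nat \<Rightarrow> nat \<Rightarrow> nat \<Rightarrow> nat \<Rightarrow> nat set \<Rightarrow> nat set" where
  "active N \<Lambda> w S F = (\<lambda>m. m mod N) ` ((F \<inter> homed N \<Lambda> w) \<union> {S})"

definition gaplen :: "nat \<Rightarrow> nat set \<Rightarrow> nat \<Rightarrow> nat" where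
  "gaplen N A x = (if A - {x} = {} then N else Min ((\<lambda>y. (y + N - x) mod N) ` (A - {x})))"

definition largest_gap_starts :: "nat \<Rightarrow> nat set \<Rightarrow> nat set" where
  "largest_gap_starts N A = {x \<in> A. \<forall>y\<in>A. gaplen N A y \<le> gaplen N A x}"

definition traffic :: "nat \<Rightarrow> real \<Rightarrow> real \<Rightarrow> real \<Rightarrow> nat pmf \<Rightarrow> nat pmf \<Rightarrow> nat pmf
    \<Rightarrow> (nat \<times> nat set) pmf" where
  "traffic N \<alpha> \<beta> \<gamma> \<mu> \<nu> \<kappa> =
     bind_pmf (pmf_of_list [(0::nat, \<alpha>), (1, \<beta>), (2, \<gamma>)]) (\<lambda>c.
       if c = 0 then
         bind_pmf (pmf_of_set {1..N}) (\<lambda>S. bind_pmf \<mu> (\<lambda>l.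
           bind_pmf (pmf_of_set {F. F \<subseteq> {1..N} - {S} \<and> card F = l}) (\<lambda>F. return_pmf (S, F))))
       else if c = 1 then
         bind_pmf (pmf_of_set {1..N-1}) (\<lambda>S. bind_pmf \<nu> (\<lambda>l.
           bind_pmf (pmf_of_set {F'. F' \<subseteq> {1..N-1} - {S} \<and> card F' = l - 1})
             (\<lambda>F'. return_pmf (S, F' \<union> {N}))))
       else
         bind_pmf \<kappa> (\<lambda>l.
           bind_pmf (pmf_of_set {F. F \<subseteq> {1..N-1} \<and> card F = l}) (\<lambda>F. return_pmf (N, F))))"

text \<open>Full model on wavelength lambda: outcomes (S, F, G) where G is the start node
  (in {0..<N}) of the chosen largest gap, chosen uniformly among ties.\<close>
definition model :: "nat \<Rightarrow> nat \<Rightarrow> nat \<Rightarrow> real \<Rightarrow> real \<Rightarrow> real \<Rightarrow> nat pmf \<Rightarrow> nat pmf \<Rightarrow> nat pmf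
    \<Rightarrow> (nat \<times> nat set \<times> nat) pmf" where
  "model N \<Lambda> w \<alpha> \<beta> \<gamma> \<mu> \<nu> \<kappa> =
     bind_pmf (traffic N \<alpha> \<beta> \<gamma> \<mu> \<nu> \<kappa>) (\<lambda>(S, F).
       bind_pmf (pmf_of_set (largest_gap_starts N (active N \<Lambda> w S F)))
         (\<lambda>G. return_pmf (S, F, G)))"

text \<open>Segment u_n (n taken mod N; u_0 = u_N) lies on the clockwise arc from S to G,
  i.e. it is traversed clockwise on wavelength lambda.\<close>
definition cw_seg :: "nat \<Rightarrow> nat \<Rightarrow> nat \<Rightarrow> nat \<Rightarrow> bool" where
  "cw_seg N n S G =
     (let j = n mod N; s = S mod N in
        1 \<le> (j + N - s) mod N \<and> (j + N - s) mod N \<le> (G + N - s) mod N)"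

end

theory Submission
  imports Defs
begin

text \<open>Measure node positions by their clockwise offset from the sender S. The offset of n+1
  is that of n plus one, unless n+1 is S. Hence segment n+1 is on the clockwise arc from S to
  G iff segment n is or n = S, except when the arc ends at n; and if it ends at n, then
  segment n is on it unless n = S. So on every outcome
  1[u_(n+1) clockwise] + 1[G = n] = 1[u_n clockwise] + 1[S = n] with disjoint events on
  the right, and taking probabilities gives the balance equation.\<close>

definition cw_offset :: "nat \<Rightarrow> nat \<Rightarrow> nat \<Rightarrow> nat" where
  "cw_offset N s j = (j + N - s) mod N"

lemma cw_seg_iff_cw_offset:
  "cw_seg N n S G \<longleftrightarrow>
     1 \<le> cw_offset N (S mod N) (n mod N) \<and>
     cw_offset N (S mod N) (n mod N) \<le> cw_offset N (S mod N) G"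
  unfolding cw_seg_def cw_offset_def Let_def ..

lemma cw_offset_eq:
  fixes j N s :: nat
  assumes "j < N" and "s < N"
  shows "cw_offset N s j = (if s \<le> j then j - s else j + N - s)"
  using assms by (auto simp: cw_offset_def le_mod_geq)

lemma cw_offset_less: "0 < N \<Longrightarrow> cw_offset N s j < N"
  by (simp add: cw_offset_def)

lemma cw_offset_self: "0 < N \<Longrightarrow> cw_offset N s s = 0"
  by (simp add: cw_offset_def)

lemma cw_offset_inj:
  fixes j k N s :: nat
  assumes "j < N" and "k < N" and "s < N"
  shows "cw_offset N s j = cw_offset N s k \<longleftrightarrow> j = k"
  using assms by (auto simp: cw_offset_eq)

lemma cw_offset_Suc:
  fixes n N s :: nat
  assumes "n < N" and "s < N"
  shows "cw_offset N s ((n + 1) mod N) =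
    (if cw_offset N s n = N - 1 then 0 else cw_offset N s n + 1)"
proof (cases "n + 1 = N")
  case True
  then show ?thesis using assms cw_offset_eq[of 0 N s] by (auto simp: cw_offset_eq)
next
  case False
  then show ?thesis using assms cw_offset_eq[of "n + 1" N s] by (auto simp: cw_offset_eq)
qed

lemma cw_seg_Suc_iff:
  assumes "n < N" and "G < N"
  shows "cw_seg N (n + 1) S G \<longleftrightarrow> (cw_seg N n S G \<or> S mod N = n) \<and> G \<noteq> n"
proof -
  define s where "s = S mod N"
  have s_less: "s < N" using assms(1) by (simp add: s_def)
  define d where "d = cw_offset N s n"
  define g where "g = cw_offset N s G"
  have "d < N" and "g < N" using assms(1) by (simp_all add: d_def g_def cw_offset_less)
  moreover have "cw_offset N s ((n + 1) mod N) = (if d = N - 1 then 0 else d + 1)"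
    using cw_offset_Suc[OF assms(1) s_less] by (simp add: d_def)
  moreover have "d = g \<longleftrightarrow> G = n"
    using cw_offset_inj[OF assms(1,2) s_less] by (auto simp: d_def g_def)
  moreover have "d = 0 \<longleftrightarrow> s = n"
    using cw_offset_inj[OF assms(1) s_less s_less] cw_offset_self[of N s] s_less by (auto simp: d_def)
  moreover have "cw_seg N (n + 1) S G \<longleftrightarrow>
      1 \<le> cw_offset N s ((n + 1) mod N) \<and> cw_offset N s ((n + 1) mod N) \<le> g"
    by (simp only: cw_seg_iff_cw_offset s_def g_def mod_mod_trivial)
  moreover have "cw_seg N n S G \<longleftrightarrow> 1 \<le> d \<and> d \<le> g"
    using assms(1) by (simp add: cw_seg_iff_cw_offset s_def d_def g_def)
  ultimately show ?thesis
    unfolding s_def[symmetric] by auto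
qed

lemma cw_seg_gap_start: "n < N \<Longrightarrow> cw_seg N n S n \<longleftrightarrow> S mod N \<noteq> n"
  using cw_offset_inj[of n N "S mod N" "S mod N"] cw_offset_self[of N "S mod N"]
  by (auto simp: cw_seg_iff_cw_offset)

lemma not_cw_seg_at_sender: "S mod N = n mod N \<Longrightarrow> \<not> cw_seg N n S G"
  unfolding cw_seg_def Let_def by simp

lemma measure_pmf_prob_eq_add_diff:
  assumes "\<And>x. x \<in> set_pmf M \<Longrightarrow> x \<in> A \<longleftrightarrow> (x \<in> B \<or> x \<in> C) \<and> x \<notin> D"
    and "\<And>x. x \<in> set_pmf M \<Longrightarrow> x \<in> D \<Longrightarrow> x \<in> B \<or> x \<in> C"
    and "B \<inter> C = {}"
  shows "measure_pmf.prob M A = measure_pmf.prob M B + measure_pmf.prob M C - measure_pmf.prob M D"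
proof -
  let ?X = "set_pmf M"
  have "A \<inter> ?X = (B \<union> C) \<inter> ?X - D \<inter> ?X" and "D \<inter> ?X \<subseteq> (B \<union> C) \<inter> ?X"
    using assms(1,2) by blast+
  then have "measure_pmf.prob M (A \<inter> ?X) =
      measure_pmf.prob M ((B \<union> C) \<inter> ?X) - measure_pmf.prob M (D \<inter> ?X)"
    by (simp add: measure_pmf.finite_measure_Diff)
  moreover have "measure_pmf.prob M (B \<union> C) = measure_pmf.prob M B + measure_pmf.prob M C"
    using assms(3) by (simp add: measure_pmf.finite_measure_Union)
  ultimately show ?thesis by (simp add: measure_Int_set_pmf)
qed

lemma finite_homed: "finite (homed N \<Lambda> w)"
proof -
  have "homed N \<Lambda> w = (\<lambda>k. w + k * \<Lambda>) ` {..<N div \<Lambda>}"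
    unfolding homed_def by auto
  then show ?thesis by simp
qed

lemma finite_active: "finite (active N \<Lambda> w S F)"
  unfolding active_def using finite_homed by simp

lemma active_nonempty: "active N \<Lambda> w S F \<noteq> {}"
  unfolding active_def by simp

lemma active_lessThan: "0 < N \<Longrightarrow> active N \<Lambda> w S F \<subseteq> {..<N}"
  unfolding active_def by auto

lemma largest_gap_starts_nonempty:
  assumes "finite A" and "A \<noteq> {}"
  shows "largest_gap_starts N A \<noteq> {}"
proof -
  obtain x where "x \<in> A" and "gaplen N A x = Max (gaplen N A ` A)"
    using Max_in[of "gaplen N A ` A"] assms by (metis finite_imageI image_iff image_is_empty)
  then show ?thesis
    using assms(1) unfolding largest_gap_starts_def by auto
qed

lemma set_pmf_model:
  "set_pmf (model N \<Lambda> w \<alpha> \<beta> \<gamma> \<mu> \<nu> \<kappa>) =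
     (\<Union>(S, F) \<in> set_pmf (traffic N \<alpha> \<beta> \<gamma> \<mu> \<nu> \<kappa>).
        (\<lambda>G. (S, F, G)) ` set_pmf (pmf_of_set (largest_gap_starts N (active N \<Lambda> w S F))))"
  unfolding model_def set_bind_pmf split_beta set_return_pmf by auto

lemma set_pmf_model_gap_start:
  assumes "(S, F, G) \<in> set_pmf (model N \<Lambda> w \<alpha> \<beta> \<gamma> \<mu> \<nu> \<kappa>)"
  shows "G \<in> largest_gap_starts N (active N \<Lambda> w S F)"
proof -
  have "G \<in> set_pmf (pmf_of_set (largest_gap_starts N (active N \<Lambda> w S F)))"
    using assms unfolding set_pmf_model by blast
  moreover have "finite (largest_gap_starts N (active N \<Lambda> w S F))"
    using finite_active[of N \<Lambda> w S F] unfolding largest_gap_starts_def by simp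
  ultimately show ?thesis
    using largest_gap_starts_nonempty[OF finite_active active_nonempty] by simp
qed

theorem proposition3p1:
  fixes N \<Lambda> w :: nat and \<alpha> \<beta> \<gamma> :: real and \<mu> \<nu> \<kappa> :: "nat pmf"
  assumes "0 < \<Lambda>" and "0 < N" and "\<Lambda> dvd N"
    and "w \<in> {1..\<Lambda>}"
    and "0 \<le> \<alpha>" and "0 \<le> \<beta>" and "0 \<le> \<gamma>" and "\<alpha> + \<beta> + \<gamma> = 1"
    and "set_pmf \<mu> \<subseteq> {1..N-1}" and "set_pmf \<nu> \<subseteq> {1..N-1}" and "set_pmf \<kappa> \<subseteq> {1..N-1}"
    and "n < N"
  shows "measure_pmf.prob (model N \<Lambda> w \<alpha> \<beta> \<gamma> \<mu> \<nu> \<kappa>)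
            {(S, F, G). cw_seg N (n + 1) S G}
       = measure_pmf.prob (model N \<Lambda> w \<alpha> \<beta> \<gamma> \<mu> \<nu> \<kappa>) {(S, F, G). cw_seg N n S G}
         + measure_pmf.prob (model N \<Lambda> w \<alpha> \<beta> \<gamma> \<mu> \<nu> \<kappa>) {(S, F, G). S mod N = n}
         - measure_pmf.prob (model N \<Lambda> w \<alpha> \<beta> \<gamma> \<mu> \<nu> \<kappa>) {(S, F, G). G = n}"
proof (rule measure_pmf_prob_eq_add_diff)
  fix x assume x: "x \<in> set_pmf (model N \<Lambda> w \<alpha> \<beta> \<gamma> \<mu> \<nu> \<kappa>)"
  obtain S F G where xSFG: "x = (S, F, G)" by (cases x)
  have "G < N"
    using set_pmf_model_gap_start[of S F G] active_lessThan[OF \<open>0 < N\<close>, of \<Lambda> w S F] x xSFG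
    unfolding largest_gap_starts_def by blast
  then show "x \<in> {(S, F, G). cw_seg N (n + 1) S G} \<longleftrightarrow>
      (x \<in> {(S, F, G). cw_seg N n S G} \<or> x \<in> {(S, F, G). S mod N = n}) \<and>
      x \<notin> {(S, F, G). G = n}"
    using cw_seg_Suc_iff[OF \<open>n < N\<close> \<open>G < N\<close>, of S] xSFG by simp
next
  fix x :: "nat \<times> nat set \<times> nat"
  assume "x \<in> {(S, F, G). G = n}"
  then show "x \<in> {(S, F, G). cw_seg N n S G} \<or> x \<in> {(S, F, G). S mod N = n}"
    using cw_seg_gap_start[OF \<open>n < N\<close>] by auto
next
  show "{(S, F :: nat set, G). cw_seg N n S G} \<inter> {(S, F, G). S mod N = n} = {}"
    using not_cw_seg_at_sender[of _ N n] \<open>n < N\<close> by auto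
qed

end
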